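(* Let $\mathbb{F}\subset\mathbb{C}$ be a field, let $n\in\mathbb{N}$, let $\alpha_1,\ldots,\alpha_n$ be non-negative integers, and let $F\colon\mathbb{F}^n\to\mathbb{C}$ be a symmetric $n$-additive function. Then the function $g\colon\mathbb{F}\to\mathbb{C}$ defined by \[ g(x)=F(x^{\alpha_1},\ldots,x^{\alpha_n})\qquad(x\in\mathbb{F}) \] (with the convention $x^0=1$) is a generalized monomial of degree $\alpha_1+\cdots+\alpha_n$.
   Context: A function $A\colon\mathbb{F}^k\to\mathbb{C}$ is $k$-additive if it is additive (with respect to the additive group of $\mathbb{F}$) in each variable; a $0$-additive function is a constant. A function $f\colon\mathbb{F}\to\mathbb{C}$ is a generalized monomial of degree $k$ if there is a symmetric $k$-additive $A\colon\mathbb{F}^k\to\mathbb{C}$ with $f(x)=A(x,\ldots,x)$ for all $x\in\mathbb{F}$. *)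

theory Defs
  imports Complex_Main "HOL-Library.Multiset"
begin

definition complex_subfield :: "complex set \<Rightarrow> bool" where
  "complex_subfield K \<longleftrightarrow> 0 \<in> K \<and> 1 \<in> K \<and>
     (\<forall>x\<in>K. \<forall>y\<in>K. x + y \<in> K \<and> x * y \<in> K \<and> x - y \<in> K) \<and>
     (\<forall>x\<in>K. x \<noteq> 0 \<longrightarrow> inverse x \<in> K)"

text \<open>Points of K^k are represented as lists of length k with entries in K.\<close>
definition tuples :: "complex set \<Rightarrow> nat \<Rightarrow> complex list set" where
  "tuples K k = {xs. length xs = k \<and> set xs \<subseteq> K}"

definition k_additive :: "complex set \<Rightarrow> nat \<Rightarrow> (complex list \<Rightarrow> complex) \<Rightarrow> bool" where
  "k_additive K k A \<longleftrightarrow>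
     (\<forall>xs\<in>tuples K k. \<forall>i<k. \<forall>a\<in>K. \<forall>b\<in>K.
        A (xs[i := a + b]) = A (xs[i := a]) + A (xs[i := b]))"

definition symmetric_on :: "complex set \<Rightarrow> nat \<Rightarrow> (complex list \<Rightarrow> complex) \<Rightarrow> bool" where
  "symmetric_on K k A \<longleftrightarrow>
     (\<forall>xs\<in>tuples K k. \<forall>ys\<in>tuples K k. mset xs = mset ys \<longrightarrow> A xs = A ys)"

definition generalized_monomial :: "complex set \<Rightarrow> nat \<Rightarrow> (complex \<Rightarrow> complex) \<Rightarrow> bool" where
  "generalized_monomial K k f \<longleftrightarrow>
     (\<exists>A. symmetric_on K k A \<and> k_additive K k A \<and>
          (\<forall>x\<in>K. f x = A (replicate k x)))"

end

theory Submission
  imports Defs "HOL-Combinatorics.Permutations"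
begin

text \<open>
  Split \<open>{..<\<alpha>\<^sub>1+\<dots>+\<alpha>\<^sub>n}\<close> into consecutive blocks of sizes \<open>\<alpha>\<^sub>1, \<dots>, \<alpha>\<^sub>n\<close> and let
  \<open>G(y\<^sub>1, \<dots>, y\<^sub>k)\<close> be \<open>F\<close> applied to the products of the \<open>y\<^sub>j\<close> over these blocks. Each
  \<open>y\<^sub>j\<close> lies in exactly one block, so it enters exactly one argument of \<open>F\<close>, and linearly;
  hence \<open>G\<close> is \<open>k\<close>-additive, and its diagonal is \<open>G(x, \<dots>, x) = F(x^\<alpha>\<^sub>1, \<dots>, x^\<alpha>\<^sub>n)\<close>.
  Averaging \<open>G\<close> over all permutations of its arguments makes it symmetric without changing
  its additivity or its diagonal.
\<close>

lemma complex_subfield_prod_closed: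
  assumes "complex_subfield K" and "\<And>j. j \<in> S \<Longrightarrow> f j \<in> K"
  shows "prod f S \<in> K"
  using assms(2)
  by (induction S rule: infinite_finite_induct) (use assms(1) in \<open>auto simp: complex_subfield_def\<close>)

definition symmetrize :: "nat \<Rightarrow> ('a list \<Rightarrow> 'b::field_char_0) \<Rightarrow> 'a list \<Rightarrow> 'b" where
  "symmetrize k G ys = (\<Sum>\<sigma> | \<sigma> permutes {..<k}. G (permute_list \<sigma> ys)) / fact k"

lemma symmetrize_permute_list:
  assumes "p permutes {..<length ys}"
  shows "symmetrize (length ys) G (permute_list p ys) = symmetrize (length ys) G ys"
proof -
  have "(\<Sum>\<sigma> | \<sigma> permutes {..<length ys}. G (permute_list \<sigma> (permute_list p ys)))
      = (\<Sum>\<sigma> | \<sigma> permutes {..<length ys}. G (permute_list (p \<circ> \<sigma>) ys))"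
  proof (rule sum.cong[OF refl])
    fix \<sigma> assume "\<sigma> \<in> {\<sigma>. \<sigma> permutes {..<length ys}}"
    then have "permute_list (p \<circ> \<sigma>) ys = permute_list \<sigma> (permute_list p ys)"
      by (intro permute_list_compose) simp
    then show "G (permute_list \<sigma> (permute_list p ys)) = G (permute_list (p \<circ> \<sigma>) ys)"
      by simp
  qed
  also have "\<dots> = (\<Sum>\<sigma> | \<sigma> permutes {..<length ys}. G (permute_list \<sigma> ys))"
    by (rule setum_permutations_compose_left[OF assms, symmetric])
  finally show ?thesis by (simp add: symmetrize_def)
qed

lemma symmetric_on_symmetrize: "symmetric_on K k (symmetrize k G)"
  unfolding symmetric_on_def
proof (intro ballI impI)
  fix xs ys assume "ys \<in> tuples K k" and "mset xs = mset ys"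
  obtain p where "p permutes {..<length ys}" "permute_list p ys = xs"
    using mset_eq_permutation[OF \<open>mset xs = mset ys\<close>] .
  moreover have "length ys = k" using \<open>ys \<in> tuples K k\<close> by (simp add: tuples_def)
  ultimately show "symmetrize k G xs = symmetrize k G ys"
    using symmetrize_permute_list[of p ys G] by simp
qed

lemma permute_list_list_update:
  assumes "\<sigma> permutes {..<length xs}" and "i < length xs"
  shows "permute_list \<sigma> (xs[i := w]) = (permute_list \<sigma> xs)[inv \<sigma> i := w]"
proof (rule nth_equalityI)
  fix j assume "j < length (permute_list \<sigma> (xs[i := w]))"
  then have j: "j < length xs" by simp
  have "\<sigma> j = i \<longleftrightarrow> j = inv \<sigma> i"
    using permutes_inv_eq[OF assms(1)] by metis
  then show "permute_list \<sigma> (xs[i := w]) ! j = (permute_list \<sigma> xs)[inv \<sigma> i := w] ! j"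
    using j assms by (auto simp: permute_list_nth nth_list_update)
qed simp

lemma permute_list_in_tuples:
  assumes "\<sigma> permutes {..<k}" and "xs \<in> tuples K k"
  shows "permute_list \<sigma> xs \<in> tuples K k"
  using assms by (simp add: tuples_def)

lemma k_additive_symmetrize:
  assumes "k_additive K k G"
  shows "k_additive K k (symmetrize k G)"
  unfolding k_additive_def
proof (intro ballI allI impI)
  fix xs i a b assume xs: "xs \<in> tuples K k" and i: "i < k" and ab: "a \<in> K" "b \<in> K"
  have len: "length xs = k" using xs by (simp add: tuples_def)
  have split: "G (permute_list \<sigma> (xs[i := a + b]))
      = G (permute_list \<sigma> (xs[i := a])) + G (permute_list \<sigma> (xs[i := b]))"
    if \<sigma>: "\<sigma> permutes {..<k}" for \<sigma>
  proof -
    have "inv \<sigma> i < k"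
      using permutes_in_image[OF permutes_inv[OF \<sigma>]] i by simp
    then show ?thesis
      using assms ab permute_list_in_tuples[OF \<sigma> xs]
        permute_list_list_update[of \<sigma> xs i] \<sigma> i len
      unfolding k_additive_def by simp
  qed
  show "symmetrize k G (xs[i := a + b]) = symmetrize k G (xs[i := a]) + symmetrize k G (xs[i := b])"
    by (simp add: symmetrize_def split sum.distrib add_divide_distrib)
qed

lemma permute_list_replicate:
  assumes "\<sigma> permutes {..<k}"
  shows "permute_list \<sigma> (replicate k x) = replicate k x"
proof (rule nth_equalityI)
  fix i assume "i < length (permute_list \<sigma> (replicate k x))"
  then show "permute_list \<sigma> (replicate k x) ! i = replicate k x ! i"
    using assms permutes_in_image[OF assms] by (simp add: permute_list_nth)
qed simp

lemma symmetrize_replicate: "symmetrize k G (replicate k x) = G (replicate k x)"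
proof -
  have "(\<Sum>\<sigma> | \<sigma> permutes {..<k}. G (permute_list \<sigma> (replicate k x)))
      = (\<Sum>\<sigma> | \<sigma> permutes {..<k}. G (replicate k x))"
    by (intro sum.cong) (simp_all add: permute_list_replicate)
  also have "\<dots> = fact k * G (replicate k x)"
    by (simp add: card_permutations)
  finally show ?thesis by (simp add: symmetrize_def)
qed

definition block_start :: "nat list \<Rightarrow> nat \<Rightarrow> nat" where
  "block_start al i = sum_list (take i al)"

definition block :: "nat list \<Rightarrow> nat \<Rightarrow> nat set" where
  "block al i = {block_start al i ..< block_start al (Suc i)}"

definition block_prods :: "nat list \<Rightarrow> 'a::comm_monoid_mult list \<Rightarrow> 'a list" where
  "block_prods al ys = map (\<lambda>i. \<Prod>j\<in>block al i. ys ! j) [0..<length al]"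

lemma block_start_mono: "i \<le> j \<Longrightarrow> block_start al i \<le> block_start al j"
  unfolding block_start_def by (metis le_add_diff_inverse sum_list_append take_add le_add1)

lemma block_start_length: "block_start al (length al) = sum_list al"
  by (simp add: block_start_def)

lemma card_block: "i < length al \<Longrightarrow> card (block al i) = al ! i"
  by (simp add: block_def block_start_def take_Suc_conv_app_nth)

lemma block_subset: "i < length al \<Longrightarrow> block al i \<subseteq> {..<sum_list al}"
  using block_start_mono[of "Suc i" "length al" al]
  by (auto simp: block_def block_start_length)

lemma block_disjoint_less: "i < j \<Longrightarrow> q \<in> block al i \<Longrightarrow> q \<notin> block al j"
  using block_start_mono[of "Suc i" j al] by (simp add: block_def)

lemma block_disjoint: "i \<noteq> j \<Longrightarrow> q \<in> block al i \<Longrightarrow> q \<notin> block al j"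
  using block_disjoint_less by (metis linorder_neqE_nat)

lemma UN_block: "(\<Union>i<m. block al i) = {..<block_start al m}"
proof (induction m)
  case 0
  then show ?case by (simp add: block_start_def)
next
  case (Suc m)
  have "(\<Union>i<Suc m. block al i) = {..<block_start al m} \<union> block al m"
    using Suc by (simp add: lessThan_Suc sup_commute)
  also have "\<dots> = {..<block_start al (Suc m)}"
    unfolding block_def by (rule ivl_disj_un_one(2)) (simp add: block_start_mono)
  finally show ?case .
qed

lemma block_cover:
  assumes "q < sum_list al"
  obtains i where "i < length al" and "q \<in> block al i"
  using assms UN_block[where m = "length al" and al = al] by (auto simp: block_start_length)

lemma block_prods_in_tuples:
  assumes "complex_subfield K" and "ys \<in> tuples K (sum_list al)"
  shows "block_prods al ys \<in> tuples K (length al)"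
proof -
  have "ys ! j \<in> K" if "j \<in> block al i" "i < length al" for i j
    using that block_subset assms(2) by (force simp: tuples_def)
  then have "(\<Prod>j\<in>block al i. ys ! j) \<in> K" if "i < length al" for i
    using that by (intro complex_subfield_prod_closed[OF assms(1)])
  then show ?thesis by (auto simp: block_prods_def tuples_def)
qed

lemma block_prods_list_update:
  assumes "i < length al" and "q \<in> block al i" and "q < length ys"
  shows "block_prods al (ys[q := v]) = (block_prods al ys)[i := v * (\<Prod>j\<in>block al i - {q}. ys ! j)]"
proof (rule nth_equalityI)
  fix l assume "l < length (block_prods al (ys[q := v]))"
  then have l: "l < length al" by (simp add: block_prods_def)
  show "block_prods al (ys[q := v]) ! l = (block_prods al ys)[i := v * (\<Prod>j\<in>block al i - {q}. ys ! j)] ! l"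
  proof (cases "l = i")
    case True
    have "(\<Prod>j\<in>block al i. ys[q := v] ! j) = ys[q := v] ! q * (\<Prod>j\<in>block al i - {q}. ys[q := v] ! j)"
      using assms(2) by (intro prod.remove) (simp_all add: block_def)
    also have "(\<Prod>j\<in>block al i - {q}. ys[q := v] ! j) = (\<Prod>j\<in>block al i - {q}. ys ! j)"
      by (intro prod.cong) auto
    finally show ?thesis using True l assms(3) by (simp add: block_prods_def)
  next
    case False
    then have "q \<notin> block al l" using block_disjoint assms(2) by metis
    then have "(\<Prod>j\<in>block al l. ys[q := v] ! j) = (\<Prod>j\<in>block al l. ys ! j)"
      by (intro prod.cong refl) (metis nth_list_update_neq)
    then show ?thesis using False l by (simp add: block_prods_def)
  qed
qed (simp add: block_prods_def)

lemma block_prods_replicate: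
  "block_prods al (replicate (sum_list al) x) = map (\<lambda>a. x ^ a) al"
proof (rule nth_equalityI)
  fix i assume "i < length (block_prods al (replicate (sum_list al) x))"
  then have i: "i < length al" by (simp add: block_prods_def)
  have "(\<Prod>j\<in>block al i. replicate (sum_list al) x ! j) = (\<Prod>j\<in>block al i. x)"
    using block_subset[OF i] by (intro prod.cong) auto
  then show "block_prods al (replicate (sum_list al) x) ! i = map (\<lambda>a. x ^ a) al ! i"
    using i by (simp add: block_prods_def card_block)
qed (simp add: block_prods_def)

lemma k_additive_block_prods:
  assumes K: "complex_subfield K" and F: "k_additive K (length al) F"
  shows "k_additive K (sum_list al) (\<lambda>ys. F (block_prods al ys))"
  unfolding k_additive_def
proof (intro ballI allI impI)
  fix ys q a b assume ys: "ys \<in> tuples K (sum_list al)" and q: "q < sum_list al"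
    and ab: "a \<in> K" "b \<in> K"
  obtain i where i: "i < length al" "q \<in> block al i" using block_cover[OF q] .
  define c where "c = (\<Prod>j\<in>block al i - {q}. ys ! j)"
  have "c \<in> K"
    unfolding c_def using ys block_subset[OF i(1)] i(2)
    by (intro complex_subfield_prod_closed[OF K]) (force simp: tuples_def)
  then have "a * c \<in> K" "b * c \<in> K" using ab K by (auto simp: complex_subfield_def)
  moreover have "q < length ys" using ys q by (simp add: tuples_def)
  ultimately show "F (block_prods al (ys[q := a + b]))
      = F (block_prods al (ys[q := a])) + F (block_prods al (ys[q := b]))"
    using F block_prods_in_tuples[OF K ys] i
    by (simp add: block_prods_list_update c_def[symmetric] distrib_right k_additive_def)
qed

theorem lemma3:
  fixes K :: "complex set" and n :: nat and alpha :: "nat list"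
    and F :: "complex list \<Rightarrow> complex"
  assumes "complex_subfield K"
    and "length alpha = n"
    and "symmetric_on K n F" and "k_additive K n F"
  shows "generalized_monomial K (sum_list alpha) (\<lambda>x. F (map (\<lambda>a. x ^ a) alpha))"
proof -
  let ?k = "sum_list alpha"
  let ?A = "symmetrize ?k (\<lambda>ys. F (block_prods alpha ys))"
  have "k_additive K ?k ?A"
    using assms(1,2,4) by (intro k_additive_symmetrize k_additive_block_prods) auto
  moreover have "F (map (\<lambda>a. x ^ a) alpha) = ?A (replicate ?k x)" for x
    by (simp add: symmetrize_replicate block_prods_replicate)
  ultimately show ?thesis
    unfolding generalized_monomial_def using symmetric_on_symmetrize by blast
qed

end
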